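(* Let $\boldsymbol{\mathcal{D}} = \begin{pmatrix}\boldsymbol{W}_p\\ \boldsymbol{U}_f \\ \boldsymbol{Y}_f\end{pmatrix}$ be a data matrix with full row rank and LQ decomposition as described in the context. For any $\boldsymbol{a}\in\mathbb{R}^\ell$, let $(\boldsymbol{\xi};\mathbf{u}_f;\mathbf{y}_f) := \boldsymbol{\mathcal{D}}\boldsymbol{a}$ and $\boldsymbol{\gamma}_i:=\boldsymbol{Q}_i\boldsymbol{a}$. Then \begin{align*} \|\boldsymbol{\gamma}_1\|_2^2 &= \|\boldsymbol{\xi}\|_{\left(\boldsymbol{W}_p\boldsymbol{W}_p^\top\right)^{-1}}^2,\\ \|\boldsymbol{\gamma}_2\|_2^2 &= \|\mathbf{u}_f-\boldsymbol{U}_f \boldsymbol{W}_p^+\boldsymbol{\xi}\|_{\boldsymbol{\mathcal{R}}_\text{reg}}^2,\\ \|\boldsymbol{\gamma}_3\|_2^2 &= \|\mathbf{y}_f-\hat{\mathbf{y}}_\text{SPC}(\boldsymbol{\xi}, \mathbf{u}_f)\|_{\boldsymbol{\mathcal{Q}}_\text{reg}}^2, \end{align*} where $\boldsymbol{\mathcal{R}}_\text{reg} :=\left(\boldsymbol{U}_f\left(\boldsymbol{I}-\boldsymbol{W}_p^+\boldsymbol{W}_p\right)\boldsymbol{U}_f^\top\right)^{-1}$, $\boldsymbol{\mathcal{Q}}_\text{reg} :=\left(\boldsymbol{Y}_f (\boldsymbol{I}-\boldsymbol{Z}^+\boldsymbol{Z}) \boldsymbol{Y}_f^\top\right)^{-1}$,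 $\boldsymbol{Z}:=\begin{pmatrix}\boldsymbol{W}_p\\ \boldsymbol{U}_f\end{pmatrix}$ and $\hat{\mathbf{y}}_\text{SPC}(\boldsymbol{\xi},\mathbf{u}_f) := \boldsymbol{Y}_f\boldsymbol{Z}^+\begin{pmatrix}\boldsymbol{\xi}\\ \mathbf{u}_f\end{pmatrix}$. Moreover, $\boldsymbol{\gamma}_4$ does not affect $(\boldsymbol{\xi},\mathbf{u}_f,\mathbf{y}_f)$.
   Context: $\boldsymbol{M}^+$ denotes the Moore–Penrose pseudoinverse and $\|\boldsymbol{x}\|_{\boldsymbol{M}}^2 := \boldsymbol{x}^\top\boldsymbol{M}\boldsymbol{x}$. Data: $m$ inputs, $p$ outputs, past horizon $N_p$, future horizon $N_f$, $L=N_p+N_f$, and $\ell$ data trajectories. The data matrix $\boldsymbol{\mathcal{D}}\in\mathbb{R}^{L(m+p)\times\ell}$ has blocks $\boldsymbol{W}_p\in\mathbb{R}^{N_p(m+p)\times\ell}$, $\boldsymbol{U}_f\in\mathbb{R}^{mN_f\times \ell}$, $\boldsymbol{Y}_f\in\mathbb{R}^{pN_f\times\ell}$ and is assumed to have full row rank. Its LQ decomposition is $\boldsymbol{\mathcal{D}} = \begin{pmatrix} \boldsymbol{L}_{11} & \boldsymbol{0} & \boldsymbol{0} & \boldsymbol{0} \\ \boldsymbol{L}_{21} & \boldsymbol{L}_{22} & \boldsymbol{0} & \boldsymbol{0} \\ \boldsymbol{L}_{31} & \boldsymbol{L}_{32} & \boldsymbol{L}_{33} & \boldsymbol{0} \end{pmatrix}\begin{pmatrix}\boldsymbol{Q}_1\\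 \boldsymbol{Q}_2\\ \boldsymbol{Q}_3\\ \boldsymbol{Q}_4\end{pmatrix}$, with non-singular square diagonal blocks $\boldsymbol{L}_{11},\boldsymbol{L}_{22},\boldsymbol{L}_{33}$ (of sizes matching $\boldsymbol{W}_p,\boldsymbol{U}_f,\boldsymbol{Y}_f$) and $\boldsymbol{Q}=\begin{pmatrix}\boldsymbol{Q}_1^\top & \boldsymbol{Q}_2^\top&\boldsymbol{Q}_3^\top&\boldsymbol{Q}_4^\top\end{pmatrix}^\top\in\mathbb{R}^{\ell\times\ell}$ orthogonal (so $\boldsymbol{Q}_i\boldsymbol{Q}_i^\top=\boldsymbol{I}$ and $\boldsymbol{Q}_i\boldsymbol{Q}_j^\top=\boldsymbol{0}$ for $i\ne j$). *)

theory Defs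
  imports "HOL-Analysis.Analysis"
begin

definition vstack :: "real^'n^'a \<Rightarrow> real^'n^'b \<Rightarrow> real^'n^('a + 'b)" where
  "vstack A B = (\<chi> i. case i of Inl j \<Rightarrow> A $ j | Inr j \<Rightarrow> B $ j)"

definition vjoin :: "real^'a \<Rightarrow> real^'b \<Rightarrow> real^('a + 'b)" where
  "vjoin x y = (\<chi> i. case i of Inl j \<Rightarrow> x $ j | Inr j \<Rightarrow> y $ j)"

text \<open>Moore-Penrose pseudoinverse, defined by the four Penrose conditions
  (it exists and is unique).\<close>
definition is_pinv :: "real^'n^'m \<Rightarrow> real^'m^'n \<Rightarrow> bool" where
  "is_pinv A X \<longleftrightarrow> A ** X ** A = A \<and> X ** A ** X = X \<and>
     transpose (A ** X) = A ** X \<and> transpose (X ** A) = X ** A"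

definition pinv :: "real^'n^'m \<Rightarrow> real^'m^'n" where
  "pinv A = (SOME X. is_pinv A X)"

definition wnorm2 :: "real^'n \<Rightarrow> real^'n^'n \<Rightarrow> real" where
  "wnorm2 x M = x \<bullet> (M *v x)"

end

theory Submission
  imports Defs
begin

(* Both Wp = L11 Q1 and Z = vstack Wp Uf = Lz (vstack Q1 Q2), with Lz block lower triangular
   and invertible, factor through matrices with orthonormal rows. So the Moore-Penrose
   projectors pinv Wp ** Wp and pinv Z ** Z are the orthogonal projectors Q1^T Q1 and
   Q1^T Q1 + Q2^T Q2, the residuals of Uf and Yf after projection are L22 Q2 and L33 Q3, and
   their Gram matrices are L22 L22^T and L33 L33^T. Finally, for invertible L the
   (L L^T)^-1-weighted norm of L g is the Euclidean norm of g. *)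

lemma matrix_add_rdistrib: "((A::real^'n^'m) + B) ** (C::real^'p^'n) = A ** C + B ** C"
  by (simp add: vec_eq_iff matrix_matrix_mult_def sum.distrib algebra_simps)

lemma matrix_diff_ldistrib: "(A::real^'n^'m) ** ((B::real^'p^'n) - C) = A ** B - A ** C"
  by (simp add: vec_eq_iff matrix_matrix_mult_def sum_subtractf algebra_simps)

lemma matrix_mul_uminus_right: "(A::real^'n^'m) ** (- (B::real^'p^'n)) = - (A ** B)"
  by (simp add: vec_eq_iff matrix_matrix_mult_def sum_negf)

lemma transpose_add: "transpose ((A::real^'n^'m) + B) = transpose A + transpose B"
  by (simp add: vec_eq_iff transpose_def)

lemma transpose_zero [simp]: "transpose (0::real^'n^'m) = 0"
  by (simp add: vec_eq_iff transpose_def)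

lemma matrix_inv_right:
  fixes A :: "real^'n^'n"
  assumes "invertible A"
  shows "A ** matrix_inv A = mat 1"
  using someI_ex[of "\<lambda>A'. A ** A' = mat 1 \<and> A' ** A = mat 1"] assms
  unfolding invertible_def matrix_inv_def by blast

lemma matrix_inv_left:
  fixes A :: "real^'n^'n"
  assumes "invertible A"
  shows "matrix_inv A ** A = mat 1"
  using matrix_inv_right[OF assms] matrix_left_right_inverse by blast

lemma matrix_inv_unique:
  fixes A B :: "real^'n^'n"
  assumes "A ** B = mat 1"
  shows "matrix_inv A = B"
proof -
  have "invertible A"
    using assms invertible_right_inverse by blast
  have "matrix_inv A = matrix_inv A ** (A ** B)"
    by (simp add: assms)
  also have "\<dots> = (matrix_inv A ** A) ** B"
    by (simp add: matrix_mul_assoc)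
  also have "\<dots> = B"
    by (simp add: matrix_inv_left \<open>invertible A\<close>)
  finally show ?thesis .
qed

definition hstack :: "real^'m^'k \<Rightarrow> real^'n^'k \<Rightarrow> real^('m + 'n)^'k" where
  "hstack A B = (\<chi> i j. case j of Inl j \<Rightarrow> A $ i $ j | Inr j \<Rightarrow> B $ i $ j)"

lemma sum_UNIV_Plus:
  "(\<Sum>x\<in>(UNIV::('a::finite + 'b::finite) set). f x :: real)
     = (\<Sum>x\<in>UNIV. f (Inl x)) + (\<Sum>x\<in>UNIV. f (Inr x))"
  by (subst UNIV_Plus_UNIV[symmetric], subst sum.Plus) (auto simp: comp_def)

lemma vstack_mult: "vstack A B ** C = vstack (A ** C) (B ** C)"
  by (simp add: vec_eq_iff vstack_def matrix_matrix_mult_def split: sum.split)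

lemma mult_hstack: "A ** hstack B C = hstack (A ** B) (A ** C)"
  by (simp add: vec_eq_iff hstack_def matrix_matrix_mult_def split: sum.split)

lemma hstack_mult_vstack: "hstack A B ** vstack C D = A ** C + B ** D"
  by (simp add: vec_eq_iff hstack_def vstack_def matrix_matrix_mult_def sum_UNIV_Plus)

lemma transpose_vstack: "transpose (vstack A B) = hstack (transpose A) (transpose B)"
  by (simp add: vec_eq_iff hstack_def vstack_def transpose_def split: sum.split)

lemma hstack_add: "hstack A B + hstack C D = hstack (A + C) (B + D)"
  by (simp add: vec_eq_iff hstack_def split: sum.split)

lemma hstack_zero [simp]: "hstack 0 0 = 0"
  by (simp add: vec_eq_iff hstack_def split: sum.split)

lemma vstack_mult_vec: "vstack A B *v x = vjoin (A *v x) (B *v x)"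
  by (simp add: vec_eq_iff vstack_def vjoin_def matrix_vector_mult_def split: sum.split)

lemma mat_1_block:
  "(mat 1 :: real^('m::finite + 'n::finite)^('m + 'n)) = vstack (hstack (mat 1) 0) (hstack 0 (mat 1))"
  by (simp add: vec_eq_iff vstack_def hstack_def mat_def split: sum.split)

lemma invertible_block_lower_triangular:
  fixes A :: "real^'m^'m" and C :: "real^'m^'n" and D :: "real^'n^'n"
  assumes "invertible A" "invertible D"
  shows "invertible (vstack (hstack A 0) (hstack C D))"
proof -
  let ?B = "vstack (hstack (matrix_inv A) 0)
    (hstack (- (matrix_inv D ** C ** matrix_inv A)) (matrix_inv D))"
  have "vstack (hstack A 0) (hstack C D) ** ?B = mat 1"
    by (simp add: vstack_mult hstack_mult_vstack mult_hstack hstack_add mat_1_block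
        matrix_mul_uminus_right matrix_mul_assoc matrix_inv_right assms)
  then show ?thesis
    using invertible_right_inverse by blast
qed

lemma vstack_orthonormal_rows:
  fixes Q :: "real^'n^'k" and R :: "real^'n^'j"
  assumes "Q ** transpose Q = mat 1" "R ** transpose R = mat 1" "R ** transpose Q = 0"
  shows "vstack Q R ** transpose (vstack Q R) = mat 1"
proof -
  have "Q ** transpose R = 0"
    by (metis assms(3) matrix_transpose_mul transpose_transpose transpose_zero)
  with assms show ?thesis
    unfolding vstack_mult by (simp add: transpose_vstack mult_hstack mat_1_block)
qed

lemma is_pinv_pinv:
  assumes "is_pinv A X"
  shows "is_pinv A (pinv A)"
  unfolding pinv_def using assms by (rule someI)

lemma is_pinv_if_right_inverse:
  fixes A :: "real^'n^'m"
  assumes "A ** X = mat 1" "transpose (X ** A) = X ** A"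
  shows "is_pinv A X"
  unfolding is_pinv_def using assms
  by (metis matrix_mul_assoc matrix_mul_lid matrix_mul_rid transpose_mat)

lemma generalized_inverse_mult_self_unique:
  fixes A :: "real^'n^'m"
  assumes "A ** X ** A = A" "transpose (X ** A) = X ** A"
    and "A ** Y ** A = A" "transpose (Y ** A) = Y ** A"
  shows "X ** A = Y ** A"
proof -
  have absorb: "F ** A = G ** A ** (F ** A)"
    if F: "transpose (F ** A) = F ** A" and G: "A ** G ** A = A" "transpose (G ** A) = G ** A"
    for F G :: "real^'m^'n"
  proof -
    have "F ** A = transpose A ** transpose F"
      by (metis F matrix_transpose_mul)
    also have "transpose A = G ** A ** transpose A"
      by (metis G matrix_mul_assoc matrix_transpose_mul)
    finally show ?thesis
      by (metis F matrix_mul_assoc matrix_transpose_mul)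
  qed
  have "X ** A = transpose (Y ** A ** (X ** A))"
    using absorb[of X Y] assms by simp
  also have "\<dots> = X ** A ** (Y ** A)"
    using assms by (simp add: matrix_transpose_mul)
  also have "\<dots> = Y ** A"
    using absorb[of Y X] assms by simp
  finally show ?thesis .
qed

lemma pinv_mult_self_eq:
  assumes "is_pinv A X"
  shows "pinv A ** A = X ** A"
  using is_pinv_pinv[OF assms] assms unfolding is_pinv_def
  by (intro generalized_inverse_mult_self_unique) auto

lemma pinv_mult_self_LQ:
  fixes L :: "real^'k^'k" and Q :: "real^'n^'k"
  assumes "invertible L" "Q ** transpose Q = mat 1"
  shows "pinv (L ** Q) ** (L ** Q) = transpose Q ** Q"
proof -
  let ?X = "transpose Q ** matrix_inv L"
  have "L ** Q ** ?X = L ** (Q ** transpose Q) ** matrix_inv L"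
    by (simp add: matrix_mul_assoc)
  then have right_inverse: "L ** Q ** ?X = mat 1"
    by (simp add: assms matrix_inv_right)
  have "?X ** (L ** Q) = transpose Q ** (matrix_inv L ** L) ** Q"
    by (simp add: matrix_mul_assoc)
  then have projector: "?X ** (L ** Q) = transpose Q ** Q"
    by (simp add: assms matrix_inv_left)
  have "is_pinv (L ** Q) ?X"
    by (rule is_pinv_if_right_inverse[OF right_inverse]) (simp add: projector matrix_transpose_mul)
  with projector show ?thesis
    by (simp only: pinv_mult_self_eq)
qed

lemma mult_complement_row_projector:
  fixes Q :: "real^'n^'k" and R :: "real^'n^'j"
  assumes "Q ** transpose Q = mat 1" "R ** transpose Q = 0"
  shows "(M ** Q + N ** R) ** (mat 1 - transpose Q ** Q) = N ** R"
proof -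
  have cancel: "Q ** (transpose Q ** Q) = Q" "R ** (transpose Q ** Q) = 0"
    by (simp_all add: matrix_mul_assoc assms)
  show ?thesis
    by (simp add: matrix_diff_ldistrib matrix_add_rdistrib cancel flip: matrix_mul_assoc)
qed

lemma mult_transpose_orthonormal_rows:
  fixes L :: "real^'k^'j" and Q :: "real^'n^'k"
  assumes "Q ** transpose Q = mat 1"
  shows "L ** Q ** transpose (L ** Q) = L ** transpose L"
proof -
  have "L ** Q ** transpose (L ** Q) = L ** (Q ** transpose Q) ** transpose L"
    unfolding matrix_transpose_mul by (simp add: matrix_mul_assoc)
  then show ?thesis
    by (simp add: assms)
qed

lemma mult_transpose_orthogonal_complement:
  fixes Q :: "real^'n^'k" and R :: "real^'n^'j"
  assumes "R ** transpose R = mat 1" "R ** transpose Q = 0"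
  shows "N ** R ** transpose (M ** Q + N ** R) = N ** transpose N"
proof -
  have "N ** R ** transpose (M ** Q) = N ** (R ** transpose Q) ** transpose M"
    unfolding matrix_transpose_mul by (simp add: matrix_mul_assoc)
  then show ?thesis
    by (simp add: transpose_add matrix_add_ldistrib mult_transpose_orthonormal_rows assms)
qed

lemma wnorm2_inverse_gram:
  fixes L :: "real^'n^'n"
  assumes "invertible L"
  shows "wnorm2 (L *v g) (matrix_inv (L ** transpose L)) = norm g ^ 2"
proof -
  let ?Li = "matrix_inv L"
  have "L ** transpose L ** (transpose ?Li ** ?Li) = L ** transpose (?Li ** L) ** ?Li"
    by (simp add: matrix_mul_assoc matrix_transpose_mul)
  then have inverse_gram: "matrix_inv (L ** transpose L) = transpose ?Li ** ?Li"
    by (intro matrix_inv_unique) (simp add: assms matrix_inv_left matrix_inv_right)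
  have "(transpose ?Li ** ?Li) *v (L *v g) = transpose ?Li *v g"
    by (metis assms matrix_inv_left matrix_mul_assoc matrix_mul_rid matrix_vector_mul_assoc)
  then have "wnorm2 (L *v g) (matrix_inv (L ** transpose L)) = (L *v g) \<bullet> (transpose ?Li *v g)"
    unfolding wnorm2_def inverse_gram by simp
  also have "\<dots> = ((L *v g) v* transpose ?Li) \<bullet> g"
    by (simp only: dot_lmul_matrix)
  also have "\<dots> = g \<bullet> g"
    by (simp add: matrix_vector_mul_assoc assms matrix_inv_left)
  finally show ?thesis
    by (simp add: power2_norm_eq_inner)
qed

lemma norm_eq_wnorm2_LQ:
  fixes L :: "real^'k^'k" and Q :: "real^'n^'k"
  assumes "A = L ** Q" "invertible L" "Q ** transpose Q = mat 1"
  shows "norm (Q *v a) ^ 2 = wnorm2 (A *v a) (matrix_inv (A ** transpose A))"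
  using wnorm2_inverse_gram[OF assms(2)]
  by (simp add: assms(1,3) mult_transpose_orthonormal_rows flip: matrix_vector_mul_assoc)

lemma norm_eq_wnorm2_residual:
  fixes L :: "real^'k^'k" and Q :: "real^'n^'k" and N :: "real^'j^'j" and R :: "real^'n^'j"
  assumes A: "A = L ** Q" "invertible L" "Q ** transpose Q = mat 1"
    and B: "B = M ** Q + N ** R" "invertible N" "R ** transpose R = mat 1" "R ** transpose Q = 0"
  shows "norm (R *v a) ^ 2 = wnorm2 (B *v a - B ** pinv A *v (A *v a))
    (matrix_inv (B ** (mat 1 - pinv A ** A) ** transpose B))"
proof -
  have residual: "B ** (mat 1 - pinv A ** A) = N ** R"
    using A B by (simp add: pinv_mult_self_LQ mult_complement_row_projector)
  have gram: "B ** (mat 1 - pinv A ** A) ** transpose B = N ** transpose N"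
    unfolding residual using B(1,3,4) by (simp add: mult_transpose_orthogonal_complement)
  have "B *v a - B ** pinv A *v (A *v a) = (B ** (mat 1 - pinv A ** A)) *v a"
    by (simp add: matrix_diff_ldistrib matrix_vector_mult_diff_rdistrib matrix_vector_mul_assoc
        matrix_mul_assoc)
  also have "\<dots> = N *v (R *v a)"
    by (simp add: residual matrix_vector_mul_assoc)
  finally show ?thesis
    by (simp add: gram wnorm2_inverse_gram B(2))
qed

theorem corollary1:
  fixes m p Np Nf :: nat
    and Wp :: "real^'l^'a" and Uf :: "real^'l^'b" and Yf :: "real^'l^'c"
    and L11 :: "real^'a^'a" and L21 :: "real^'a^'b" and L22 :: "real^'b^'b"
    and L31 :: "real^'a^'c" and L32 :: "real^'b^'c" and L33 :: "real^'c^'c"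
    and Q1 :: "real^'l^'a" and Q2 :: "real^'l^'b" and Q3 :: "real^'l^'c"
    and Q4 :: "real^'l^'d"
    and a :: "real^'l"
  assumes dims: "CARD('a) = Np * (m + p)" "CARD('b) = m * Nf" "CARD('c) = p * Nf"
    and full_rank: "rank (vstack Wp (vstack Uf Yf)) = CARD('a + ('b + 'c))"
    and LQ1: "Wp = L11 ** Q1"
    and LQ2: "Uf = L21 ** Q1 + L22 ** Q2"
    and LQ3: "Yf = L31 ** Q1 + L32 ** Q2 + L33 ** Q3"
    and nonsing: "invertible L11" "invertible L22" "invertible L33"
    and orth_rows:
      "Q1 ** transpose Q1 = mat 1" "Q2 ** transpose Q2 = mat 1"
      "Q3 ** transpose Q3 = mat 1" "Q4 ** transpose Q4 = mat 1"
      "Q1 ** transpose Q2 = 0" "Q1 ** transpose Q3 = 0" "Q1 ** transpose Q4 = 0"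
      "Q2 ** transpose Q1 = 0" "Q2 ** transpose Q3 = 0" "Q2 ** transpose Q4 = 0"
      "Q3 ** transpose Q1 = 0" "Q3 ** transpose Q2 = 0" "Q3 ** transpose Q4 = 0"
      "Q4 ** transpose Q1 = 0" "Q4 ** transpose Q2 = 0" "Q4 ** transpose Q3 = 0"
    and orth_cols:
      "transpose Q1 ** Q1 + transpose Q2 ** Q2 + transpose Q3 ** Q3
         + transpose Q4 ** Q4 = mat 1"
  shows
    "let xi = Wp *v a; uf = Uf *v a; yf = Yf *v a;
         Z = vstack Wp Uf;
         Rreg = matrix_inv (Uf ** (mat 1 - pinv Wp ** Wp) ** transpose Uf);
         Qreg = matrix_inv (Yf ** (mat 1 - pinv Z ** Z) ** transpose Yf);
         yspc = Yf ** pinv Z *v vjoin xi uf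
     in norm (Q1 *v a) ^ 2 = wnorm2 xi (matrix_inv (Wp ** transpose Wp))
      \<and> norm (Q2 *v a) ^ 2 = wnorm2 (uf - Uf ** pinv Wp *v xi) Rreg
      \<and> norm (Q3 *v a) ^ 2 = wnorm2 (yf - yspc) Qreg
      \<and> (\<forall>b. Q1 *v b = Q1 *v a \<and> Q2 *v b = Q2 *v a \<and> Q3 *v b = Q3 *v a
             \<longrightarrow> vstack Wp (vstack Uf Yf) *v b = vstack Wp (vstack Uf Yf) *v a)"
proof -
  define Z where "Z = vstack Wp Uf"
  define Qz where "Qz = vstack Q1 Q2"
  define Lz where "Lz = vstack (hstack L11 0) (hstack L21 L22)"
  have Z: "Z = Lz ** Qz"
    by (simp add: Z_def Lz_def Qz_def vstack_mult hstack_mult_vstack LQ1 LQ2)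
  have Y: "Yf = hstack L31 L32 ** Qz + L33 ** Q3"
    by (simp add: Qz_def hstack_mult_vstack LQ3)
  have "invertible Lz"
    unfolding Lz_def using nonsing(1,2) by (rule invertible_block_lower_triangular)
  moreover have "Qz ** transpose Qz = mat 1"
    unfolding Qz_def using orth_rows(1,2,8) by (rule vstack_orthonormal_rows)
  moreover have "Q3 ** transpose Qz = 0"
    by (simp add: Qz_def transpose_vstack mult_hstack orth_rows)
  ultimately have gamma3: "norm (Q3 *v a) ^ 2 = wnorm2 (Yf *v a - Yf ** pinv Z *v (Z *v a))
      (matrix_inv (Yf ** (mat 1 - pinv Z ** Z) ** transpose Yf))"
    using norm_eq_wnorm2_residual[OF Z _ _ Y nonsing(3) orth_rows(3)] by blast
  have data: "vstack Wp (vstack Uf Yf) *v b = vstack Wp (vstack Uf Yf) *v a"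
    if "Q1 *v b = Q1 *v a" "Q2 *v b = Q2 *v a" "Q3 *v b = Q3 *v a" for b
    using that by (simp add: vstack_mult_vec LQ1 LQ2 LQ3 matrix_vector_mult_add_rdistrib
        flip: matrix_vector_mul_assoc)
  show ?thesis
    unfolding Let_def vstack_mult_vec[symmetric] Z_def[symmetric]
    using norm_eq_wnorm2_LQ[OF LQ1 nonsing(1) orth_rows(1)]
      norm_eq_wnorm2_residual[OF LQ1 nonsing(1) orth_rows(1) LQ2 nonsing(2) orth_rows(2,8)]
      gamma3 data
    by blast
qed

end
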